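(* For every $k\in\mathbb Z$, the $q$-dimension of the charge-$k$ subspace of $\mathcal F^{-1}$ (which is the irreducible $\widehat{\mathfrak{gl}}_\infty$-module of level $-1$ attached to $k$) is $$\mathsf Q^{(k)}_{-1}(q):=\mathrm{tr}_{\mathcal F^{-1}_{(k)}}q^{L_0}=\frac{1}{(q)_\infty^2}\sum_{m\ge0}(-1)^mq^{\frac12m(m+1)+|k|(m+\frac12)}.$$
   Context: Let $\mathcal F^{-1}$ be the bosonic Fock space generated from a vacuum by commuting creation operators $\gamma^+_{-r},\gamma^-_{-r}$, $r\in\frac12+\mathbb Z_{\ge0}$, with basis the monomials $\gamma^+_{-r_1}\cdots\gamma^+_{-r_a}\gamma^-_{-s_1}\cdots\gamma^-_{-s_b}|0\rangle$ ($r_1\ge\cdots\ge r_a>0$, $s_1\ge\cdots\ge s_b>0$ in $\frac12+\mathbb Z$). $L_0$ acts on such a monomial by $\sum r_i+\sum s_j$; $\mathcal F^{-1}_{(k)}$ is the span of monomials with $a-b=k$. $(q)_\infty=\prod_{i\ge1}(1-q^i)$. *)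

theory Defs
  imports "HOL-Analysis.Analysis" "HOL-Library.Multiset"
begin

text \<open>Basis monomials of the bosonic Fock space F^{-1}:
  gamma^+_{-r_1}...gamma^+_{-r_a} gamma^-_{-s_1}...gamma^-_{-s_b}|0>
  with r_i, s_j in 1/2 + Z_{>=0}.  We encode the half-integer j + 1/2 by j :: nat,
  so a monomial is a pair (A, B) of finite multisets of naturals
  (A = indices of the gamma^+ factors, B = those of the gamma^- factors).\<close>

type_synonym fock_monomial = "nat multiset \<times> nat multiset"

definition fock_L0 :: "fock_monomial \<Rightarrow> real" where
  "fock_L0 M = (\<Sum>j\<in>#fst M. real j + 1/2) + (\<Sum>j\<in>#snd M. real j + 1/2)"

definition fock_charge :: "fock_monomial \<Rightarrow> int" where
  "fock_charge M = int (size (fst M)) - int (size (snd M))"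

definition fock_basis :: "int \<Rightarrow> fock_monomial set" where
  "fock_basis k = {M. fock_charge M = k}"

definition qpoch_inf :: "real \<Rightarrow> real" where
  "qpoch_inf q = (\<Prod>i. 1 - q ^ Suc i)"

end

theory Submission
  imports Defs
begin

(* Write (q)_n for the finite q-Pochhammer symbol and Q = (q)_\<infinity>.  A basis monomial of
   charge n \<ge> 0 is a pair (A, B) of multisets with |A| = b + n and |B| = b for some b, and its
   L_0-weight is \<Sigma>A + \<Sigma>B + b + n/2.  Since the multisets of size a have generating function
   1/(q)_a (split off the minimum and shift the rest down), the trace over charge n equals
   q^{n/2} G_n with G_n = \<Sigma>_b q^b / ((q)_b (q)_{b+n}); charge -n is the image of charge n under
   exchanging A and B.  The remaining, purely analytic, identity is Q^2 G_n = T_n with the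
   partial theta series T_n = \<Sigma>_m (-1)^m q^{m(m+1)/2 + nm}.  It follows from two recursions:
   G_n + q^{n+1} G_{n+1} does not depend on n and tends to 1/Q^2 (so it equals 1/Q^2), while
   T_n + q^{n+1} T_{n+1} = 1.  Hence D_n = Q^2 G_n - T_n is bounded and satisfies
   |D_n| \<le> q |D_{n+1}|, which forces D = 0. *)

lemma has_sum_Sigma_nonneg:
  fixes f :: "'a \<times> 'b \<Rightarrow> real"
  assumes slices: "\<And>x. x \<in> A \<Longrightarrow> ((\<lambda>y. f (x, y)) has_sum g x) (B x)"
    and outer: "(g has_sum S) A"
    and nonneg: "\<And>x y. x \<in> A \<Longrightarrow> y \<in> B x \<Longrightarrow> 0 \<le> f (x, y)"
  shows "(f has_sum S) (Sigma A B)"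
proof (rule has_sum_SigmaI[OF slices outer])
  show "f summable_on Sigma A B"
    by (rule summable_on_SigmaI[OF slices _ nonneg])
       (use outer in \<open>auto simp: summable_on_def\<close>)
qed

lemma has_sum_Times_nonneg:
  fixes f :: "'a \<Rightarrow> real" and g :: "'b \<Rightarrow> real"
  assumes "(f has_sum a) A" "(g has_sum b) B"
    and "\<And>x. x \<in> A \<Longrightarrow> 0 \<le> f x" "\<And>y. y \<in> B \<Longrightarrow> 0 \<le> g y"
  shows "((\<lambda>p. f (fst p) * g (snd p)) has_sum (a * b)) (A \<times> B)"
proof (rule has_sum_Sigma_nonneg)
  show "((\<lambda>y. f (fst (x, y)) * g (snd (x, y))) has_sum f x * b) B" for x
    using has_sum_cmult_right[OF assms(2), of "f x"] by simp
  show "((\<lambda>x. f x * b) has_sum a * b) A" by (rule has_sum_cmult_left[OF assms(1)])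
qed (use assms in auto)

text \<open>A bounded sequence that grows at least geometrically, |D n| \<le> c |D (n+1)| with c < 1,
  must vanish: iterating gives |D n| \<le> c^j M for every j.\<close>
lemma bounded_expanding_sequence_zero:
  fixes D :: "nat \<Rightarrow> real"
  assumes c: "0 \<le> c" "c < 1"
    and expanding: "\<And>n. \<bar>D n\<bar> \<le> c * \<bar>D (Suc n)\<bar>"
    and bounded: "\<And>n. \<bar>D n\<bar> \<le> M"
  shows "D n = 0"
proof -
  have iterated: "\<bar>D n\<bar> \<le> c ^ j * M" for j n
  proof (induction j arbitrary: n)
    case (Suc j)
    have "\<bar>D n\<bar> \<le> c * \<bar>D (Suc n)\<bar>" by (rule expanding)
    also have "\<dots> \<le> c * (c ^ j * M)" using Suc c by (intro mult_left_mono) auto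
    finally show ?case by simp
  qed (use bounded in simp)
  have "(\<lambda>j. c ^ j * M) \<longlonglongrightarrow> 0"
    using c by (intro tendsto_mult_left_zero LIMSEQ_power_zero) simp
  hence "\<bar>D n\<bar> \<le> 0" by (rule LIMSEQ_le_const) (use iterated in auto)
  thus ?thesis by simp
qed

section \<open>Combinatorics of the monomial basis\<close>

lemma sum_mset_half: "(\<Sum>j\<in>#A. real j + 1/2) = real (sum_mset A) + real (size A) / 2"
  by (induction A) (auto simp: algebra_simps)

definition shift_insert :: "nat \<Rightarrow> nat multiset \<Rightarrow> nat multiset" where
  "shift_insert t B = add_mset t (image_mset (\<lambda>x. x + t) B)"

lemma sum_mset_shift_insert: "sum_mset (shift_insert t B) = Suc (size B) * t + sum_mset B"
  by (induction B) (auto simp: shift_insert_def)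

text \<open>Every nonempty multiset of naturals arises uniquely this way: t is its minimum.\<close>
lemma multiset_min_split_bij:
  "bij_betw (\<lambda>(t, B). shift_insert t B)
     (UNIV \<times> {B :: nat multiset. size B = a}) {A. size A = Suc a}"
  unfolding shift_insert_def
proof (rule bij_betw_byWitness[where f' = "\<lambda>A. (Min_mset A,
          image_mset (\<lambda>x. x - Min_mset A) (A - {#Min_mset A#}))"], goal_cases)
  have min_in: "Min_mset A \<in># A" if "size A = Suc a" for A :: "nat multiset"
    using that by (intro Min_in) auto
  {
    case 1
    have "Min_mset (add_mset t (image_mset (\<lambda>x. x + t) B)) = t" for t and B :: "nat multiset"
      by (intro Min_eqI) auto
    thus ?case by (auto simp: multiset.map_comp o_def)
  next
    case 2
    have "add_mset (Min_mset A) (image_mset (\<lambda>x. x + Min_mset A)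
        (image_mset (\<lambda>x. x - Min_mset A) (A - {#Min_mset A#}))) = A"
      if "size A = Suc a" for A :: "nat multiset"
    proof -
      have "image_mset (\<lambda>x. x - Min_mset A + Min_mset A) (A - {#Min_mset A#})
          = image_mset id (A - {#Min_mset A#})"
        by (rule image_mset_cong) (auto dest: in_diffD)
      thus ?thesis by (simp add: multiset.map_comp o_def insert_DiffM[OF min_in[OF that]])
    qed
    thus ?case by auto
  next
    case 3
    show ?case by auto
  next
    case 4
    have "size (A - {#Min_mset A#}) = a" if "size A = Suc a" for A :: "nat multiset"
      using min_in[OF that] that by (simp add: size_Diff_singleton)
    thus ?case by auto
  }
qed

lemma fock_L0_eq:
  "fock_L0 (A, B) = real (sum_mset A + sum_mset B) + real (size A + size B) / 2"
  unfolding fock_L0_def fst_conv snd_conv sum_mset_half by (simp add: field_simps)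

lemma fock_basis_nat_bij:
  "bij_betw snd (SIGMA b:UNIV. {A. size A = b + n} \<times> {B. size B = b}) (fock_basis (int n))"
  by (rule bij_betw_byWitness[where f' = "\<lambda>M. (size (snd M), M)"])
     (auto simp: fock_basis_def fock_charge_def image_iff)

lemma fock_basis_swap_bij: "bij_betw prod.swap (fock_basis k) (fock_basis (- k))"
  by (rule bij_betw_byWitness[where f' = prod.swap])
     (auto simp: fock_basis_def fock_charge_def)

lemma fock_L0_swap: "fock_L0 (prod.swap M) = fock_L0 M"
  by (simp add: fock_L0_def)

section \<open>The q-series\<close>

definition qpoch :: "real \<Rightarrow> nat \<Rightarrow> real" where
  "qpoch q n = (\<Prod>i<n. 1 - q ^ Suc i)"

text \<open>The summands of G_n, and G_n itself (the charge-n trace without the factor q^{n/2}).\<close>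
definition charge_term :: "real \<Rightarrow> nat \<Rightarrow> nat \<Rightarrow> real" where
  "charge_term q n b = q ^ b / (qpoch q b * qpoch q (b + n))"

definition charge_series :: "real \<Rightarrow> nat \<Rightarrow> real" where
  "charge_series q n = (\<Sum>b. charge_term q n b)"

definition partial_theta :: "real \<Rightarrow> nat \<Rightarrow> real" where
  "partial_theta q n = (\<Sum>m. (-1) ^ m * q ^ (m * (m + 1) div 2 + n * m))"

lemma qpoch_0 [simp]: "qpoch q 0 = 1"
  by (simp add: qpoch_def)

lemma qpoch_Suc: "qpoch q (Suc n) = qpoch q n * (1 - q ^ Suc n)"
  by (simp add: qpoch_def)

lemma triangular_Suc: "Suc m * (Suc m + 1) div 2 = m * (m + 1) div 2 + Suc m"
proof -
  have "Suc m * (Suc m + 1) = m * (m + 1) + 2 * Suc m" by (simp add: algebra_simps)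
  thus ?thesis by simp
qed

context
  fixes q :: real
  assumes q_pos: "0 < q" and q_less_1: "q < 1"
begin

lemma qpoch_factor_pos: "0 < 1 - q ^ Suc i"
  using power_Suc_less_one[OF q_pos q_less_1, of i] by linarith

lemma qpoch_pos: "0 < qpoch q n"
  unfolding qpoch_def using qpoch_factor_pos by (intro prod_pos) auto

lemma qpoch_antimono: "m \<le> n \<Longrightarrow> qpoch q n \<le> qpoch q m"
proof (induction n rule: dec_induct)
  case (step n)
  have "qpoch q (Suc n) \<le> qpoch q n"
    using qpoch_pos[of n] q_pos by (simp add: qpoch_Suc mult_left_le)
  with step.IH show ?case by linarith
qed simp

text \<open>The infinite product (q)_\<infinity> converges since \<Sigma>_i q^{i+1} does.\<close>
lemma qpoch_convergent_prod: "convergent_prod (\<lambda>i. 1 - q ^ Suc i)"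
proof -
  have "summable (\<lambda>i. norm ((1 - q ^ Suc i) - 1))"
    using q_pos q_less_1 by (simp add: summable_geometric summable_mult)
  thus ?thesis
    by (intro abs_convergent_prod_imp_convergent_prod summable_imp_abs_convergent_prod)
qed

lemma qpoch_tendsto: "qpoch q \<longlonglongrightarrow> qpoch_inf q"
proof -
  from qpoch_convergent_prod have "(\<lambda>n. qpoch q (Suc n)) \<longlonglongrightarrow> qpoch_inf q"
    unfolding qpoch_inf_def qpoch_def lessThan_Suc_atMost by (rule convergent_prod_LIMSEQ)
  thus ?thesis by (rule LIMSEQ_imp_Suc)
qed

lemma qpoch_inf_le: "qpoch_inf q \<le> qpoch q n"
  by (rule decseq_ge[OF _ qpoch_tendsto]) (auto simp: decseq_def qpoch_antimono)

lemma qpoch_inf_pos: "0 < qpoch_inf q"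
proof -
  have "qpoch_inf q \<noteq> 0"
    unfolding qpoch_inf_def using qpoch_convergent_prod qpoch_factor_pos
    by (intro prodinf_nonzero) (auto simp: less_le)
  moreover have "0 \<le> qpoch_inf q"
    by (rule LIMSEQ_le_const[OF qpoch_tendsto]) (use qpoch_pos less_imp_le in blast)
  ultimately show ?thesis by simp
qed

text \<open>Euler's identity \<Sigma>_b q^b/(q)_b = 1/(q)_\<infinity>, by telescoping partial sums.\<close>
lemma euler_sums: "(\<lambda>b. q ^ b / qpoch q b) sums (1 / qpoch_inf q)"
proof -
  have partial: "(\<Sum>b<Suc N. q ^ b / qpoch q b) = 1 / qpoch q N" for N
  proof (induction N)
    case (Suc N)
    have "1 / qpoch q N + q ^ Suc N / qpoch q (Suc N) = 1 / qpoch q (Suc N)"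
      using qpoch_pos[of N] qpoch_factor_pos[of N] by (simp add: qpoch_Suc field_simps)
    with Suc show ?case by simp
  qed simp
  have "(\<lambda>N. \<Sum>b<Suc N. q ^ b / qpoch q b) \<longlonglongrightarrow> 1 / qpoch_inf q"
    unfolding partial using qpoch_inf_pos by (intro tendsto_divide qpoch_tendsto) auto
  thus ?thesis unfolding sums_def by (rule LIMSEQ_imp_Suc)
qed

lemma euler_summable: "summable (\<lambda>b. q ^ b / qpoch q b)"
  using euler_sums by (simp add: sums_iff)

lemma euler_suminf: "(\<Sum>b. q ^ b / qpoch q b) = 1 / qpoch_inf q"
  using euler_sums by (simp add: sums_iff)

lemma charge_term_nonneg: "0 \<le> charge_term q n b"
  unfolding charge_term_def using q_pos qpoch_pos[of b] qpoch_pos[of "b + n"] by simp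

text \<open>Since Q \<le> (q)_{b+n} \<le> (q)_n, each summand of G_n lies between two multiples of the
  Euler summand.\<close>
lemma charge_term_bounds:
  "q ^ b / qpoch q b / qpoch q n \<le> charge_term q n b"
  "charge_term q n b \<le> q ^ b / qpoch q b / qpoch_inf q"
proof -
  have euler_term: "0 \<le> q ^ b / qpoch q b" using q_pos qpoch_pos[of b] by simp
  have split: "charge_term q n b = q ^ b / qpoch q b / qpoch q (b + n)"
    by (simp add: charge_term_def)
  show "q ^ b / qpoch q b / qpoch q n \<le> charge_term q n b"
    unfolding split using qpoch_pos[of n] qpoch_pos[of "b + n"]
    by (intro divide_left_mono[OF qpoch_antimono euler_term]) auto
  show "charge_term q n b \<le> q ^ b / qpoch q b / qpoch_inf q"
    unfolding split using qpoch_inf_pos qpoch_pos[of "b + n"]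
    by (intro divide_left_mono[OF qpoch_inf_le euler_term]) auto
qed

lemma charge_term_summable: "summable (charge_term q n)"
proof (rule summable_comparison_test')
  show "summable (\<lambda>b. q ^ b / qpoch q b / qpoch_inf q)"
    by (rule summable_divide[OF euler_summable])
  show "norm (charge_term q n b) \<le> q ^ b / qpoch q b / qpoch_inf q" for b
    using charge_term_nonneg[of n b] charge_term_bounds(2)[of n b] by simp
qed

lemma charge_series_nonneg: "0 \<le> charge_series q n"
  unfolding charge_series_def by (intro suminf_nonneg charge_term_summable charge_term_nonneg)

lemma charge_series_bounds:
  "1 / (qpoch q n * qpoch_inf q) \<le> charge_series q n"
  "charge_series q n \<le> 1 / qpoch_inf q ^ 2"
proof -
  have "(\<Sum>b. q ^ b / qpoch q b / qpoch q n) \<le> charge_series q n"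
    unfolding charge_series_def using charge_term_bounds(1)
    by (intro suminf_le charge_term_summable summable_divide euler_summable) auto
  thus "1 / (qpoch q n * qpoch_inf q) \<le> charge_series q n"
    unfolding suminf_divide[OF euler_summable] euler_suminf by (simp add: mult.commute)
  have "charge_series q n \<le> (\<Sum>b. q ^ b / qpoch q b / qpoch_inf q)"
    unfolding charge_series_def using charge_term_bounds(2)
    by (intro suminf_le charge_term_summable summable_divide euler_summable) auto
  thus "charge_series q n \<le> 1 / qpoch_inf q ^ 2"
    unfolding suminf_divide[OF euler_summable] euler_suminf by (simp add: power2_eq_square)
qed

lemma charge_series_tendsto: "charge_series q \<longlonglongrightarrow> 1 / qpoch_inf q ^ 2"
proof (rule tendsto_sandwich[of "\<lambda>n. 1 / (qpoch q n * qpoch_inf q)" _ _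
      "\<lambda>n. 1 / qpoch_inf q ^ 2"])
  show "(\<lambda>n. 1 / (qpoch q n * qpoch_inf q)) \<longlonglongrightarrow> 1 / qpoch_inf q ^ 2"
    using qpoch_inf_pos
    by (auto intro!: tendsto_eq_intros qpoch_tendsto simp: power2_eq_square)
qed (use charge_series_bounds in auto)

subsection \<open>The trace over a charge sector\<close>

text \<open>The multisets of a naturals have generating function 1/(q)_a: by the minimum split,
  the weight of a multiset of size a + 1 is (q^{a+1})^t times the weight of the rest.\<close>
lemma multisets_has_sum:
  "((\<lambda>A. q ^ sum_mset A) has_sum (1 / qpoch q a)) {A :: nat multiset. size A = a}"
proof (induction a)
  case 0
  have "{A :: nat multiset. size A = 0} = {{#}}" by auto
  thus ?case using has_sum_finite[of "{{#}}" "\<lambda>A. q ^ sum_mset A"] by simp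
next
  case (Suc a)
  have "((\<lambda>t. (q ^ Suc a) ^ t) has_sum (1 / (1 - q ^ Suc a))) UNIV"
    using power_Suc_less_one[OF q_pos q_less_1, of a] q_pos
    by (intro sums_nonneg_imp_has_sum geometric_sums) auto
  from has_sum_Times_nonneg[OF this Suc.IH]
  have product: "((\<lambda>p. (q ^ Suc a) ^ fst p * q ^ sum_mset (snd p))
      has_sum (1 / qpoch q (Suc a))) (UNIV \<times> {B :: nat multiset. size B = a})"
    using q_pos by (simp add: qpoch_Suc mult.commute)
  have weight:
    "(q ^ Suc a) ^ fst p * q ^ sum_mset (snd p) = q ^ sum_mset (case_prod shift_insert p)"
    if p_in: "p \<in> UNIV \<times> {B. size B = a}" for p
  proof -
    obtain t B where p: "p = (t, B)" and size: "size B = a"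
      using p_in by (cases p) auto
    have "q ^ sum_mset (shift_insert t B) = (q ^ Suc a) ^ t * q ^ sum_mset B"
      by (simp only: sum_mset_shift_insert size power_add power_mult)
    thus ?thesis by (simp add: p)
  qed
  from product have "((\<lambda>p. q ^ sum_mset (case_prod shift_insert p))
      has_sum (1 / qpoch q (Suc a))) (UNIV \<times> {B :: nat multiset. size B = a})"
    by (rule has_sum_cong[THEN iffD1, rotated]) (rule weight)
  thus ?case
    by (rule has_sum_reindex_bij_betw[OF multiset_min_split_bij, THEN iffD1])
qed

text \<open>The trace over charge n \<ge> 0 is q^{n/2} G_n: the slice with b gamma^- factors
  contributes q^{n/2} q^b / ((q)_{b+n} (q)_b).\<close>
lemma fock_charge_nat_has_sum:
  "((\<lambda>M. q powr fock_L0 M) has_sum (q powr (real n / 2) * charge_series q n))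
     (fock_basis (int n))"
proof -
  define c where "c = q powr (real n / 2)"
  have slice: "((\<lambda>M. q powr fock_L0 M) has_sum c * charge_term q n b)
      ({A. size A = b + n} \<times> {B. size B = b})" for b
  proof -
    have "((\<lambda>p. q ^ sum_mset (fst p) * q ^ sum_mset (snd p)) has_sum
        (1 / qpoch q (b + n) * (1 / qpoch q b))) ({A. size A = b + n} \<times> {B. size B = b})"
      using q_pos by (intro has_sum_Times_nonneg multisets_has_sum q_less_1) auto
    from has_sum_cmult_right[OF this, of "c * q ^ b"]
    have product: "((\<lambda>p. c * q ^ b * (q ^ sum_mset (fst p) * q ^ sum_mset (snd p))) has_sum
        c * charge_term q n b) ({A. size A = b + n} \<times> {B. size B = b})"
      by (simp add: charge_term_def mult_ac)
    have weight:
      "c * q ^ b * (q ^ sum_mset (fst p) * q ^ sum_mset (snd p)) = q powr fock_L0 p"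
      if p_in: "p \<in> {A. size A = b + n} \<times> {B. size B = b}" for p
    proof -
      obtain A B where p: "p = (A, B)" and sizes: "size A = b + n" "size B = b"
        using p_in by (cases p) auto
      have "fock_L0 p = real (sum_mset A + sum_mset B + b) + real n / 2"
        using sizes by (simp add: p fock_L0_eq field_simps)
      hence "q powr fock_L0 p = q powr real (sum_mset A + sum_mset B + b) * c"
        unfolding c_def by (simp only: powr_add)
      also have "\<dots> = q ^ (sum_mset A + sum_mset B + b) * c"
        by (simp only: powr_realpow[OF q_pos])
      finally show ?thesis by (simp add: p power_add mult_ac)
    qed
    from product show ?thesis by (rule has_sum_cong[THEN iffD1, rotated]) (rule weight)
  qed
  have "((\<lambda>b. c * charge_term q n b) has_sum c * charge_series q n) UNIV"
    unfolding charge_series_def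
    by (intro has_sum_cmult_right sums_nonneg_imp_has_sum summable_sums charge_term_summable
        charge_term_nonneg)
  hence "((\<lambda>p. q powr fock_L0 (snd p)) has_sum c * charge_series q n)
      (SIGMA b:UNIV. {A. size A = b + n} \<times> {B. size B = b})"
    by (rule has_sum_Sigma_nonneg[rotated]) (use slice in auto)
  thus ?thesis
    unfolding c_def by (rule has_sum_reindex_bij_betw[OF fock_basis_nat_bij, THEN iffD1])
qed

lemma fock_charge_has_sum:
  "((\<lambda>M. q powr fock_L0 M) has_sum
      (q powr (real (nat \<bar>k\<bar>) / 2) * charge_series q (nat \<bar>k\<bar>))) (fock_basis k)"
proof (cases "0 \<le> k")
  case True
  thus ?thesis using fock_charge_nat_has_sum[of "nat \<bar>k\<bar>"] by simp
next
  case False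
  hence "fock_basis k = fock_basis (- int (nat \<bar>k\<bar>))" by simp
  thus ?thesis
    using fock_charge_nat_has_sum[of "nat \<bar>k\<bar>"]
      has_sum_reindex_bij_betw[OF fock_basis_swap_bij, of "\<lambda>M. q powr fock_L0 M"]
    by (simp add: fock_L0_swap)
qed

subsection \<open>The identity (q)_\<infinity>^2 G_n = T_n\<close>

lemma charge_term_peel_last:
  "charge_term q n b = (1 - q ^ (b + n + 1)) * charge_term q (n + 1) b"
  using qpoch_factor_pos[of "b + n"] by (simp add: charge_term_def qpoch_Suc)

lemma charge_term_peel_first:
  "(1 - q ^ Suc b) * charge_term q (n + 1) (Suc b) = q * charge_term q (n + 2) b"
proof -
  have index: "Suc b + (n + 1) = b + (n + 2)" by simp
  have "(1 - q ^ Suc b) * charge_term q (n + 1) (Suc b)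
      = (1 - q ^ Suc b) * (q * q ^ b) / ((1 - q ^ Suc b) * (qpoch q b * qpoch q (b + (n + 2))))"
    unfolding charge_term_def index qpoch_Suc[of q b] by (simp add: mult_ac)
  also have "\<dots> = q * charge_term q (n + 2) b"
    using qpoch_factor_pos[of b] by (simp add: charge_term_def)
  finally show ?thesis .
qed

text \<open>Termwise,
  the left side exceeds G_{n+1} by q^{n+1} \<Sigma>_b h_b with h_b = (1 - q^b) t_{n+1}(b); since
  h_0 = 0 and h_{b+1} = q t_{n+2}(b), this is q^{n+2} G_{n+2}.\<close>
lemma charge_series_rec:
  "charge_series q n + q ^ (n + 1) * charge_series q (n + 1)
   = charge_series q (n + 1) + q ^ (n + 2) * charge_series q (n + 2)"
proof -
  define h where "h b = (1 - q ^ b) * charge_term q (n + 1) b" for b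
  have h_Suc: "h (Suc b) = q * charge_term q (n + 2) b" for b
    unfolding h_def by (rule charge_term_peel_first)
  have h_summable: "summable h"
    by (subst summable_Suc_iff[symmetric])
       (simp only: h_Suc, intro summable_mult charge_term_summable)
  have "suminf h = (\<Sum>b. h (Suc b)) + h 0"
    using suminf_split_head[OF h_summable] by simp
  also have "\<dots> = (\<Sum>b. q * charge_term q (n + 2) b)"
    by (simp only: h_Suc) (simp add: h_def)
  also have "\<dots> = q * charge_series q (n + 2)"
    unfolding charge_series_def by (rule suminf_mult[OF charge_term_summable])
  finally have h_suminf: "suminf h = q * charge_series q (n + 2)" .
  have termwise: "charge_term q n b + q ^ (n + 1) * charge_term q (n + 1) b
      = charge_term q (n + 1) b + q ^ (n + 1) * h b" for b
    unfolding charge_term_peel_last[of n b] h_def by (simp add: algebra_simps power_add)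
  have "charge_series q n + q ^ (n + 1) * charge_series q (n + 1)
      = (\<Sum>b. charge_term q n b + q ^ (n + 1) * charge_term q (n + 1) b)"
    unfolding charge_series_def suminf_mult[OF charge_term_summable, symmetric]
    by (rule suminf_add[OF charge_term_summable summable_mult[OF charge_term_summable]])
  also have "\<dots> = (\<Sum>b. charge_term q (n + 1) b + q ^ (n + 1) * h b)"
    by (simp only: termwise)
  also have "\<dots> = charge_series q (n + 1) + q ^ (n + 1) * suminf h"
    unfolding charge_series_def suminf_mult[OF h_summable, symmetric]
    by (rule suminf_add[OF charge_term_summable summable_mult[OF h_summable], symmetric])
  finally show ?thesis by (simp add: h_suminf)
qed

text \<open>Hence G_n + q^{n+1} G_{n+1} is constant; letting n \<rightarrow> \<infinity> identifies the constant.\<close>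
lemma charge_series_invariant:
  "charge_series q n + q ^ (n + 1) * charge_series q (n + 1) = 1 / qpoch_inf q ^ 2"
proof -
  define H where "H n = charge_series q n + q ^ (n + 1) * charge_series q (n + 1)" for n
  have H_const: "H n = H 0" for n
  proof (induction n)
    case (Suc n)
    have "H (Suc n) = H n" unfolding H_def using charge_series_rec[of n] by simp
    with Suc show ?case by simp
  qed simp
  have "(\<lambda>n. q ^ (n + 1) * charge_series q (n + 1)) \<longlonglongrightarrow> 0"
  proof (rule tendsto_sandwich[of "\<lambda>_. 0" _ _ "\<lambda>n. q ^ (n + 1) * (1 / qpoch_inf q ^ 2)"])
    have "(\<lambda>n. q ^ n) \<longlonglongrightarrow> 0"
      using q_pos q_less_1 by (intro LIMSEQ_power_zero) simp
    from LIMSEQ_Suc[OF this] have "(\<lambda>n. q ^ (n + 1)) \<longlonglongrightarrow> 0" by simp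
    thus "(\<lambda>n. q ^ (n + 1) * (1 / qpoch_inf q ^ 2)) \<longlonglongrightarrow> 0"
      by (intro tendsto_mult_left_zero)
    show "eventually (\<lambda>n. q ^ (n + 1) * charge_series q (n + 1)
        \<le> q ^ (n + 1) * (1 / qpoch_inf q ^ 2)) sequentially"
      using charge_series_bounds(2) q_pos by (intro always_eventually allI mult_left_mono) auto
    show "eventually (\<lambda>n. 0 \<le> q ^ (n + 1) * charge_series q (n + 1)) sequentially"
      using charge_series_nonneg q_pos by (intro always_eventually allI mult_nonneg_nonneg) auto
  qed simp
  hence H_tendsto: "H \<longlonglongrightarrow> 1 / qpoch_inf q ^ 2 + 0"
    unfolding H_def by (intro tendsto_add charge_series_tendsto)
  have "(\<lambda>_. H 0) = H" by (rule ext) (rule H_const[symmetric])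
  hence "(\<lambda>_. H 0) \<longlonglongrightarrow> 1 / qpoch_inf q ^ 2 + 0" using H_tendsto by (simp only:)
  hence "H 0 = 1 / qpoch_inf q ^ 2" by (simp add: LIMSEQ_const_iff)
  thus ?thesis using H_const[of n] by (simp add: H_def)
qed

lemma partial_theta_term_bound:
  "norm ((-1::real) ^ m * q ^ (m * (m + 1) div 2 + n * m)) \<le> q ^ m"
proof -
  have "m \<le> m * (m + 1) div 2 + n * m"
    by (cases m) (simp_all add: triangular_Suc)
  thus ?thesis using q_pos q_less_1 by (simp add: abs_mult power_abs power_decreasing)
qed

lemma partial_theta_summable:
  "summable (\<lambda>m. (-1::real) ^ m * q ^ (m * (m + 1) div 2 + n * m))"
  by (rule summable_comparison_test'[OF summable_geometric partial_theta_term_bound])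
     (use q_pos q_less_1 in auto)

lemma partial_theta_bound: "\<bar>partial_theta q n\<bar> \<le> 1 / (1 - q)"
proof -
  define t where "t m = (-1::real) ^ m * q ^ (m * (m + 1) div 2 + n * m)" for m
  have geometric: "summable (\<lambda>m. q ^ m)"
    using q_pos q_less_1 by (simp add: summable_geometric)
  have t_bound: "norm (norm (t m)) \<le> q ^ m" for m
    using partial_theta_term_bound unfolding t_def by simp
  have norm_summable: "summable (\<lambda>m. norm (t m))"
    by (rule summable_comparison_test'[OF geometric t_bound])
  have "\<bar>partial_theta q n\<bar> \<le> (\<Sum>m. norm (t m))"
    unfolding partial_theta_def t_def[symmetric] using summable_norm[OF norm_summable] by simp
  also have "\<dots> \<le> (\<Sum>m. q ^ m)"
    by (intro suminf_le norm_summable geometric) (use t_bound in simp)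
  also have "\<dots> = 1 / (1 - q)"
    using q_pos q_less_1 by (simp add: suminf_geometric)
  finally show ?thesis .
qed

text \<open>Splitting off the m = 0 term: T_n = 1 - q^{n+1} T_{n+1}.\<close>
lemma partial_theta_rec: "partial_theta q n = 1 - q ^ (n + 1) * partial_theta q (n + 1)"
proof -
  have shifted: "(-1::real) ^ Suc m * q ^ (Suc m * (Suc m + 1) div 2 + n * Suc m)
      = - (q ^ (n + 1)) * ((-1) ^ m * q ^ (m * (m + 1) div 2 + (n + 1) * m))" for m
  proof -
    have "Suc m * (Suc m + 1) div 2 + n * Suc m = (n + 1) + (m * (m + 1) div 2 + (n + 1) * m)"
      unfolding triangular_Suc by (simp add: algebra_simps)
    thus ?thesis by (simp add: power_add)
  qed
  show ?thesis
    using suminf_split_head[OF partial_theta_summable[of n]]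
      suminf_mult[OF partial_theta_summable[of "n + 1"], of "- (q ^ (n + 1))"]
    unfolding partial_theta_def shifted by simp
qed

lemma qpoch_inf_sq_charge_series: "qpoch_inf q ^ 2 * charge_series q n = partial_theta q n"
proof -
  define D where "D n = qpoch_inf q ^ 2 * charge_series q n - partial_theta q n" for n
  have G_rec: "qpoch_inf q ^ 2 * charge_series q n
      = 1 - q ^ (n + 1) * (qpoch_inf q ^ 2 * charge_series q (n + 1))" for n
    using charge_series_invariant[of n] qpoch_inf_pos by (simp add: field_simps)
  have "\<bar>D n\<bar> \<le> q * \<bar>D (Suc n)\<bar>" for n
  proof -
    have "D n = - (q ^ (n + 1)) * D (Suc n)"
      using G_rec[of n] partial_theta_rec[of n] by (simp add: D_def algebra_simps)
    hence "\<bar>D n\<bar> = q ^ (n + 1) * \<bar>D (Suc n)\<bar>"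
      using q_pos by (simp add: abs_mult)
    also have "\<dots> \<le> q * \<bar>D (Suc n)\<bar>"
      using q_pos q_less_1 power_decreasing[of 1 "n + 1" q] by (intro mult_right_mono) auto
    finally show ?thesis .
  qed
  moreover have "\<bar>D n\<bar> \<le> 1 + 1 / (1 - q)" for n
  proof -
    have "0 \<le> qpoch_inf q ^ 2 * charge_series q n" using charge_series_nonneg by simp
    moreover have "qpoch_inf q ^ 2 * charge_series q n \<le> 1"
      using charge_series_bounds(2)[of n] qpoch_inf_pos by (simp add: field_simps)
    ultimately show ?thesis unfolding D_def using partial_theta_bound[of n] by linarith
  qed
  ultimately have "D n = 0"
    using q_pos q_less_1 by (intro bounded_expanding_sequence_zero) auto
  thus ?thesis by (simp add: D_def)
qed

lemma theta_powr_series: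
  "(\<Sum>m. (-1) ^ m * q powr (real (m * (m + 1)) / 2 + real n * (real m + 1/2)))
   = q powr (real n / 2) * partial_theta q n"
proof -
  have summand: "(-1) ^ m * q powr (real (m * (m + 1)) / 2 + real n * (real m + 1/2))
      = q powr (real n / 2) * ((-1::real) ^ m * q ^ (m * (m + 1) div 2 + n * m))" for m
  proof -
    have exponent: "real (m * (m + 1)) / 2 + real n * (real m + 1/2)
        = real (m * (m + 1) div 2 + n * m) + real n / 2"
      using real_of_nat_div[of 2 "m * (m + 1)"] by (simp add: algebra_simps)
    have "q powr (real (m * (m + 1)) / 2 + real n * (real m + 1/2))
        = q powr real (m * (m + 1) div 2 + n * m) * q powr (real n / 2)"
      unfolding exponent by (rule powr_add)
    also have "\<dots> = q ^ (m * (m + 1) div 2 + n * m) * q powr (real n / 2)"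
      by (simp only: powr_realpow[OF q_pos])
    finally show ?thesis by (simp add: mult_ac)
  qed
  show ?thesis
    unfolding summand partial_theta_def by (rule suminf_mult[OF partial_theta_summable])
qed

end

theorem proposition2p10:
  fixes k :: int and q :: real
  assumes "0 < q" and "q < 1"
  shows "((\<lambda>M. q powr fock_L0 M) has_sum
           (1 / (qpoch_inf q)\<^sup>2 *
             (\<Sum>m. (-1) ^ m * q powr (real (m * (m + 1)) / 2 + real_of_int \<bar>k\<bar> * (real m + 1/2)))))
         (fock_basis k)"
proof -
  define n where "n = nat \<bar>k\<bar>"
  have abs_k: "real_of_int \<bar>k\<bar> = real n" by (simp add: n_def)
  have closed_form: "1 / (qpoch_inf q)\<^sup>2 * (q powr (real n / 2) * partial_theta q n)
      = q powr (real n / 2) * charge_series q n"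
    using qpoch_inf_sq_charge_series[OF assms, of n] qpoch_inf_pos[OF assms]
    by (simp add: field_simps)
  show ?thesis
    unfolding abs_k theta_powr_series[OF assms] closed_form
    using fock_charge_has_sum[OF assms, of k] by (simp only: n_def)
qed

end
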